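(* Let $P$ be a finite poset and $t\geq 2$, $n\geq 1$ integers. Suppose $\mathcal{F}\subseteq[t]^n$ is induced $P$-saturated and $i\in[n]$ is such that (a) $i$ is not separating for $\mathcal{F}$, and (b) $f(i)\in\{1,t\}$ for all $f\in\mathcal{F}$. Then $L_i(\mathcal{F})=\{L_i(f):f\in\mathcal{F}\}$ is an induced $P$-saturated family in $[t]^{n+1}$.
   Context: $[n]=\{1,\dots,n\}$; $[t]^n$ is the set of functions $f:[n]\to[t]$ ordered by $f\leq g$ iff $f(j)\leq g(j)$ for all $j$. An induced copy of $P$ in $\mathcal{F}\subseteq[t]^n$ is an injective map $\phi:P\to\mathcal{F}$ with $\phi(x)\leq\phi(y)$ iff $x\leq_P y$. $\mathcal{F}$ is induced $P$-saturated if it contains no induced copy of $P$ and for every $f\in[t]^n\setminus\mathcal{F}$, $\mathcal{F}\cup\{f\}$ contains an induced copy of $P$. For $f\in[t]^n$ and $i\in[n]$: $L_i(f)\in[t]^{n+1}$ is given by $L_i(f)(x)=f(x)$ for $x\in[n]$ and $L_i(f)(n+1)=f(i)$; $D_i(f)\in[t]^{n-1}$ is given by $D_i(f)(x)=f(x)$ for $x<i$ and $D_i(f)(x)=f(x+1)$ for $i\leq x\leq n-1$. Coordinate $i$ is separating for $\mathcal{F}$ if there exist distinct $f,f'\in\mathcal{F}$ with $D_i(f)\leq D_i(f')$ and $f(i)>f'(i)$. *)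

theory Defs
  imports Main
begin

text \<open>Elements of [t]^n are represented as functions nat \<Rightarrow> nat with values in {1..t}
  on {1..n} and value 0 outside {1..n} (canonical representative).\<close>

definition cube :: "nat \<Rightarrow> nat \<Rightarrow> (nat \<Rightarrow> nat) set" where
  "cube t n = {f. (\<forall>j\<in>{1..n}. f j \<in> {1..t}) \<and> (\<forall>j. j \<notin> {1..n} \<longrightarrow> f j = 0)}"

definition leq :: "nat \<Rightarrow> (nat \<Rightarrow> nat) \<Rightarrow> (nat \<Rightarrow> nat) \<Rightarrow> bool" where
  "leq n f g \<longleftrightarrow> (\<forall>j\<in>{1..n}. f j \<le> g j)"

definition induced_copy ::
  "nat \<Rightarrow> 'a set \<Rightarrow> ('a \<times> 'a) set \<Rightarrow> (nat \<Rightarrow> nat) set \<Rightarrow> ('a \<Rightarrow> (nat \<Rightarrow> nat)) \<Rightarrow> bool" where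
  "induced_copy n P r F \<phi> \<longleftrightarrow>
     (\<forall>x\<in>P. \<phi> x \<in> F) \<and> inj_on \<phi> P \<and>
     (\<forall>x\<in>P. \<forall>y\<in>P. leq n (\<phi> x) (\<phi> y) \<longleftrightarrow> (x, y) \<in> r)"

definition has_induced_copy ::
  "nat \<Rightarrow> 'a set \<Rightarrow> ('a \<times> 'a) set \<Rightarrow> (nat \<Rightarrow> nat) set \<Rightarrow> bool" where
  "has_induced_copy n P r F \<longleftrightarrow> (\<exists>\<phi>. induced_copy n P r F \<phi>)"

definition induced_saturated ::
  "nat \<Rightarrow> nat \<Rightarrow> 'a set \<Rightarrow> ('a \<times> 'a) set \<Rightarrow> (nat \<Rightarrow> nat) set \<Rightarrow> bool" where
  "induced_saturated t n P r F \<longleftrightarrow>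
     F \<subseteq> cube t n \<and> \<not> has_induced_copy n P r F \<and>
     (\<forall>f \<in> cube t n - F. has_induced_copy n P r (insert f F))"

definition Lop :: "nat \<Rightarrow> nat \<Rightarrow> (nat \<Rightarrow> nat) \<Rightarrow> (nat \<Rightarrow> nat)" where
  "Lop n i f = (\<lambda>x. if x \<in> {1..n} then f x else if x = n + 1 then f i else 0)"

definition Dop :: "nat \<Rightarrow> nat \<Rightarrow> (nat \<Rightarrow> nat) \<Rightarrow> (nat \<Rightarrow> nat)" where
  "Dop n i f = (\<lambda>x. if x \<in> {1..n-1} then (if x < i then f x else f (x + 1)) else 0)"

definition separating :: "nat \<Rightarrow> nat \<Rightarrow> (nat \<Rightarrow> nat) set \<Rightarrow> bool" where
  "separating n i F \<longleftrightarrow>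
     (\<exists>f\<in>F. \<exists>f'\<in>F. f \<noteq> f' \<and> leq (n - 1) (Dop n i f) (Dop n i f') \<and> f i > f' i)"

end

(* L_i is an order embedding of [t]^n into [t]^(n+1), so an induced copy of P in L_i(F) would
   pull back to F. For h outside L_i(F), merge coordinates i and n+1 of h by min and by max into
   a <= b in [t]^n, which differ only at i; then L_i(f) <= h iff f <= a, and h <= L_i(f) iff
   b <= f. Because every f in F is extreme at i and i is not separating, a or b compares with F
   exactly as h does with L_i(F) and lies outside F; the copy of P that saturation yields through
   it lifts to a copy through h. *)
theory Submission
  imports Defs
begin

lemma leq_refl [simp]: "leq n f f"
  by (simp add: leq_def)

lemma leq_trans: "leq n f g \<Longrightarrow> leq n g h \<Longrightarrow> leq n f h"
  unfolding leq_def by (meson order_trans)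

lemma leq_antisym_cube:
  assumes "f \<in> cube t n" "g \<in> cube t n" "leq n f g" "leq n g f"
  shows "f = g"
proof
  fix x
  show "f x = g x"
    using assms unfolding cube_def leq_def by (cases "x \<in> {1..n}") (auto intro: antisym)
qed

lemma has_induced_copy_embed:
  assumes "has_induced_copy n P r A" "m ` A \<subseteq> B" "inj_on m A"
    and "\<And>u v. u \<in> A \<Longrightarrow> v \<in> A \<Longrightarrow> leq n' (m u) (m v) \<longleftrightarrow> leq n u v"
  shows "has_induced_copy n' P r B"
proof -
  obtain \<phi> where \<phi>: "induced_copy n P r A \<phi>"
    using assms(1) unfolding has_induced_copy_def by blast
  then have "\<phi> ` P \<subseteq> A" "inj_on \<phi> P"
    unfolding induced_copy_def by auto
  then have "inj_on (m \<circ> \<phi>) P"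
    using assms(3) by (meson comp_inj_on inj_on_subset)
  with \<phi> have "induced_copy n' P r B (m \<circ> \<phi>)"
    using assms(2,4) \<open>\<phi> ` P \<subseteq> A\<close> unfolding induced_copy_def by auto
  then show ?thesis
    unfolding has_induced_copy_def by blast
qed

lemma leq_Lop_iff:
  assumes "i \<in> {1..n}"
  shows "leq (Suc n) (Lop n i f) (Lop n i g) \<longleftrightarrow> leq n f g"
  using assms unfolding leq_def Lop_def by (auto simp: le_Suc_eq)

lemma Lop_in_cube:
  assumes "f \<in> cube t n" "i \<in> {1..n}"
  shows "Lop n i f \<in> cube t (Suc n)"
  using assms unfolding cube_def Lop_def by (auto simp: le_Suc_eq)

lemma inj_on_Lop: "inj_on (Lop n i) (cube t n)"
proof (rule inj_onI)
  fix f g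
  assume "f \<in> cube t n" "g \<in> cube t n" "Lop n i f = Lop n i g"
  show "f = g"
  proof
    fix x
    show "f x = g x"
      using \<open>f \<in> cube t n\<close> \<open>g \<in> cube t n\<close> fun_cong[OF \<open>Lop n i f = Lop n i g\<close>, of x]
      unfolding cube_def Lop_def by (auto split: if_splits)
  qed
qed

lemma not_has_induced_copy_Lop_image:
  assumes "F \<subseteq> cube t n" "i \<in> {1..n}" "\<not> has_induced_copy n P r F"
  shows "\<not> has_induced_copy (Suc n) P r (Lop n i ` F)"
proof
  let ?m = "the_inv_into F (Lop n i)"
  have inj: "inj_on (Lop n i) F"
    using inj_on_Lop assms(1) by (rule inj_on_subset)
  assume "has_induced_copy (Suc n) P r (Lop n i ` F)"
  then have "has_induced_copy n P r F"
  proof (rule has_induced_copy_embed)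
    show "?m ` Lop n i ` F \<subseteq> F" "inj_on ?m (Lop n i ` F)"
      using inj by (auto simp: the_inv_into_f_f inj_on_the_inv_into)
    show "leq n (?m u) (?m v) \<longleftrightarrow> leq (Suc n) u v" if "u \<in> Lop n i ` F" "v \<in> Lop n i ` F" for u v
      using that inj leq_Lop_iff[OF assms(2)] by (auto simp: the_inv_into_f_f)
  qed
  with assms(3) show False ..
qed

lemma leq_Dop:
  assumes "i \<in> {1..n}" "\<forall>j\<in>{1..n}. j \<noteq> i \<longrightarrow> f j \<le> g j"
  shows "leq (n - 1) (Dop n i f) (Dop n i g)"
  using assms unfolding leq_def Dop_def by auto

text \<open>If a and b differ only in coordinate i, a member of F above a but not above b is
  small at i, one below b but not below a is large at i, and off i the latter lies below b = a,
  hence below the former.\<close>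
lemma separating_if_straddling_pair:
  assumes i: "i \<in> {1..n}" and ext: "\<forall>f\<in>F. f i \<in> {1, t}"
    and agree: "\<forall>j\<in>{1..n}. j \<noteq> i \<longrightarrow> a j = b j" and "1 \<le> a i" "b i \<le> t"
    and f: "f \<in> F" "leq n a f" "\<not> leq n b f"
    and f': "f' \<in> F" "leq n f' b" "\<not> leq n f' a"
  shows "separating n i F"
proof -
  have "f i < b i"
    using f(2,3) agree i unfolding leq_def by (metis not_le)
  then have "f i = 1"
    using ext f(1) \<open>b i \<le> t\<close> by auto
  have "a i < f' i"
    using f'(2,3) agree i unfolding leq_def by (metis not_le)
  then have "f' i = t"
    using ext f'(1) \<open>1 \<le> a i\<close> by auto
  have "\<forall>j\<in>{1..n}. j \<noteq> i \<longrightarrow> f' j \<le> f j"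
    using f(2) f'(2) agree unfolding leq_def by (metis order_trans)
  then have "leq (n - 1) (Dop n i f') (Dop n i f)"
    by (rule leq_Dop[OF i])
  moreover have "f i < f' i"
    using \<open>f i = 1\<close> \<open>f' i = t\<close> \<open>a i < f' i\<close> \<open>1 \<le> a i\<close> by simp
  ultimately show ?thesis
    unfolding separating_def using f(1) f'(1) by (metis less_irrefl)
qed

lemma exists_twin_outside:
  assumes i: "i \<in> {1..n}" and nsep: "\<not> separating n i F" and ext: "\<forall>f\<in>F. f i \<in> {1, t}"
    and a: "a \<in> cube t n" and b: "b \<in> cube t n" and "leq n a b"
    and agree: "\<forall>j\<in>{1..n}. j \<noteq> i \<longrightarrow> a j = b j"
    and diagonal: "a = b \<Longrightarrow> a \<notin> F"
  obtains k where "k \<in> cube t n" "k \<notin> F"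
    "\<And>f. f \<in> F \<Longrightarrow> leq n f k \<longleftrightarrow> leq n f a"
    "\<And>f. f \<in> F \<Longrightarrow> leq n k f \<longleftrightarrow> leq n b f"
proof (cases "\<exists>f\<in>F. leq n a f \<and> \<not> leq n b f")
  case False
  have "a \<notin> F"
    using False diagonal leq_antisym_cube[OF a b \<open>leq n a b\<close>] by auto
  moreover have "leq n a f \<longleftrightarrow> leq n b f" if "f \<in> F" for f
    using False that leq_trans[OF \<open>leq n a b\<close>] by blast
  ultimately show ?thesis
    using that a by blast
next
  case True
  then obtain f where f: "f \<in> F" "leq n a f" "\<not> leq n b f" by blast
  have "1 \<le> a i" "b i \<le> t"
    using a b i unfolding cube_def by auto
  then have no_f': "leq n f' a" if "f' \<in> F" "leq n f' b" for f'
    using separating_if_straddling_pair[OF i ext agree _ _ f] nsep that by blast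
  have "b \<notin> F"
    using no_f' diagonal leq_antisym_cube[OF a b \<open>leq n a b\<close>] by auto
  moreover have "leq n f b \<longleftrightarrow> leq n f a" if "f \<in> F" for f
    using no_f' that leq_trans[OF _ \<open>leq n a b\<close>] by blast
  ultimately show ?thesis
    using that b by blast
qed

definition collapse_min :: "nat \<Rightarrow> nat \<Rightarrow> (nat \<Rightarrow> nat) \<Rightarrow> (nat \<Rightarrow> nat)" where
  "collapse_min n i h = (\<lambda>j. if j \<in> {1..n} then h j else 0)(i := min (h i) (h (Suc n)))"

definition collapse_max :: "nat \<Rightarrow> nat \<Rightarrow> (nat \<Rightarrow> nat) \<Rightarrow> (nat \<Rightarrow> nat)" where
  "collapse_max n i h = (\<lambda>j. if j \<in> {1..n} then h j else 0)(i := max (h i) (h (Suc n)))"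

lemma collapse_in_cube:
  assumes "h \<in> cube t (Suc n)" "i \<in> {1..n}"
  shows "collapse_min n i h \<in> cube t n" "collapse_max n i h \<in> cube t n"
  using assms unfolding cube_def collapse_min_def collapse_max_def
  by (auto simp: min_le_iff_disj le_max_iff_disj)

lemma leq_collapse_min_max: "leq n (collapse_min n i h) (collapse_max n i h)"
  unfolding leq_def collapse_min_def collapse_max_def by auto

lemma collapse_min_max_agree: "\<forall>j\<in>{1..n}. j \<noteq> i \<longrightarrow> collapse_min n i h j = collapse_max n i h j"
  unfolding collapse_min_def collapse_max_def by auto

lemma Lop_leq_iff_leq_collapse_min:
  assumes "i \<in> {1..n}"
  shows "leq (Suc n) (Lop n i f) h \<longleftrightarrow> leq n f (collapse_min n i h)"
  using assms unfolding leq_def Lop_def collapse_min_def by (auto simp: le_Suc_eq)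

lemma leq_Lop_iff_collapse_max_leq:
  assumes "i \<in> {1..n}"
  shows "leq (Suc n) h (Lop n i f) \<longleftrightarrow> leq n (collapse_max n i h) f"
  using assms unfolding leq_def Lop_def collapse_max_def by (auto simp: le_Suc_eq)

lemma Lop_collapse_min:
  assumes "h \<in> cube t (Suc n)" "collapse_min n i h = collapse_max n i h"
  shows "Lop n i (collapse_min n i h) = h"
proof
  fix x
  have "h i = h (Suc n)"
    using fun_cong[OF assms(2), of i] unfolding collapse_min_def collapse_max_def by simp
  then show "Lop n i (collapse_min n i h) x = h x"
    using assms(1) unfolding cube_def Lop_def collapse_min_def by auto
qed

lemma has_induced_copy_insert_Lop_image:
  assumes sat: "induced_saturated t n P r F" and i: "i \<in> {1..n}"
    and nsep: "\<not> separating n i F" and ext: "\<forall>f\<in>F. f i \<in> {1, t}"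
    and h: "h \<in> cube t (Suc n)" "h \<notin> Lop n i ` F"
  shows "has_induced_copy (Suc n) P r (insert h (Lop n i ` F))"
proof -
  have F: "F \<subseteq> cube t n"
    using sat unfolding induced_saturated_def by blast
  have "collapse_min n i h \<notin> F" if "collapse_min n i h = collapse_max n i h"
    using Lop_collapse_min[OF h(1) that] h(2) by force
  then obtain k where k: "k \<in> cube t n" "k \<notin> F"
    "\<And>f. f \<in> F \<Longrightarrow> leq n f k \<longleftrightarrow> leq n f (collapse_min n i h)"
    "\<And>f. f \<in> F \<Longrightarrow> leq n k f \<longleftrightarrow> leq n (collapse_max n i h) f"
    using exists_twin_outside[OF i nsep ext collapse_in_cube[OF h(1) i]
        leq_collapse_min_max collapse_min_max_agree] by blast
  have "has_induced_copy n P r (insert k F)"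
    using sat k(1,2) unfolding induced_saturated_def by blast
  then show ?thesis
  proof (rule has_induced_copy_embed)
    let ?m = "(Lop n i)(k := h)"
    show "?m ` insert k F \<subseteq> insert h (Lop n i ` F)"
      using k(2) by auto
    show "inj_on ?m (insert k F)"
      using inj_on_subset[OF inj_on_Lop F] h(2) k(2) by (auto simp: inj_on_def)
    show "leq (Suc n) (?m u) (?m v) \<longleftrightarrow> leq n u v" if "u \<in> insert k F" "v \<in> insert k F" for u v
      using that k(2-4) leq_Lop_iff[OF i] Lop_leq_iff_leq_collapse_min[OF i]
        leq_Lop_iff_collapse_max_leq[OF i] by auto
  qed
qed

theorem mainTheorem11:
  fixes P :: "'a set" and r :: "('a \<times> 'a) set"
    and t n i :: nat and F :: "(nat \<Rightarrow> nat) set"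
  assumes "finite P" and "partial_order_on P r"
    and "t \<ge> 2" and "n \<ge> 1"
    and "induced_saturated t n P r F"
    and "i \<in> {1..n}"
    and "\<not> separating n i F"
    and "\<forall>f\<in>F. f i \<in> {1, t}"
  shows "induced_saturated t (n + 1) P r (Lop n i ` F)"
proof -
  have F: "F \<subseteq> cube t n" "\<not> has_induced_copy n P r F"
    using assms(5) unfolding induced_saturated_def by blast+
  have "Lop n i ` F \<subseteq> cube t (Suc n)"
    using F(1) Lop_in_cube[OF _ assms(6)] by blast
  moreover have "\<not> has_induced_copy (Suc n) P r (Lop n i ` F)"
    using not_has_induced_copy_Lop_image[OF F(1) assms(6) F(2)] .
  moreover have "\<forall>h \<in> cube t (Suc n) - Lop n i ` F. has_induced_copy (Suc n) P r (insert h (Lop n i ` F))"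
    using has_induced_copy_insert_Lop_image[OF assms(5-8)] by blast
  ultimately show ?thesis
    unfolding induced_saturated_def by simp
qed

end
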